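(* Let $r \ge 3$ be an integer, let $n \ge 1$, and let $q$ be a prime power with $q \ge n$. Let $g^{q\text{-}\mathrm{ff}}_r(n)$ be the maximum cardinality of a family $\mathcal{F} \subseteq [q]^n$ containing no $q$-ary focal family of size $r$. Then $g^{q\text{-}\mathrm{ff}}_r(n) \ge q^{\lceil \frac{(r-2)n}{r-1} \rceil}$.
   Context: Here $[q]=\{1,\dots,q\}$. A family $x^{(0)}, x^{(1)}, \dots, x^{(r-1)}$ of $r$ distinct vectors in $[q]^n$ is a ($q$-ary) focal family with focus $x^{(0)}$ if for every coordinate $i \in [n]$, at least $r-2$ of the $r-1$ entries $x^{(1)}_i, \dots, x^{(r-1)}_i$ are equal to $x^{(0)}_i$. A family contains a focal family of size $r$ if some $r$ distinct members, with some choice of focus among them, form a focal family. *)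

theory Defs
  imports Complex_Main "HOL-Number_Theory.Prime_Powers"
begin

definition qcube :: "nat \<Rightarrow> nat \<Rightarrow> (nat \<Rightarrow> nat) set" where
  "qcube q n = PiE {1..n} (\<lambda>_. {1..q})"

definition focal_family :: "nat \<Rightarrow> nat \<Rightarrow> nat \<Rightarrow> (nat \<Rightarrow> (nat \<Rightarrow> nat)) \<Rightarrow> bool" where
  "focal_family q n r x \<longleftrightarrow>
     (\<forall>j<r. x j \<in> qcube q n) \<and> inj_on x {..<r} \<and>
     (\<forall>i\<in>{1..n}. card {j \<in> {1..<r}. x j i = x 0 i} \<ge> r - 2)"

definition contains_focal :: "nat \<Rightarrow> nat \<Rightarrow> nat \<Rightarrow> (nat \<Rightarrow> nat) set \<Rightarrow> bool" where
  "contains_focal q n r F \<longleftrightarrow> (\<exists>x. focal_family q n r x \<and> x ` {..<r} \<subseteq> F)"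

definition g_qff :: "nat \<Rightarrow> nat \<Rightarrow> nat \<Rightarrow> nat" where
  "g_qff q r n = Max {card F | F. F \<subseteq> qcube q n \<and> \<not> contains_focal q n r F}"

end

theory Submission
  imports Defs "HOL-Algebra.Algebraic_Closure" "HOL-Number_Theory.Residues"
begin

(* A Reed-Solomon code of dimension k = ceil((r-2)n/(r-1)) and length n <= q over the field
   with q elements is a set of q^k words of [q]^n, any two of which agree in fewer than k
   coordinates.  That field is the set of roots of X^q - X in an algebraic closure of Z/p:
   they form a subring by the Frobenius identity, and there are exactly q of them because
   X^q - X has no repeated root.  In a focal family x_0, ..., x_(r-1) the sets of coordinates
   where x_j differs from the focus x_0 are pairwise disjoint, while in a code as above each
   of them has at least n+1-k elements; hence (r-1)(n+1-k) <= n, which the choice of k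
   rules out. *)

section \<open>Frobenius endomorphism\<close>

lemma (in cring) binomial_ring:
  assumes x: "x \<in> carrier R" and y: "y \<in> carrier R"
  shows "(x \<oplus> y) [^] (n::nat) = (\<Oplus>k \<in> {..n}. [(n choose k)] \<cdot> (x [^] k \<otimes> y [^] (n - k)))"
proof (induction n)
  case 0
  then show ?case using x y by simp
next
  case (Suc n)
  define T where "T = (\<lambda>m k. [(m choose k)] \<cdot> (x [^] k \<otimes> y [^] (m - k)))"
  define a where "a = (\<lambda>k. [(n choose k)] \<cdot> (x [^] Suc k \<otimes> y [^] (n - k)))"
  define b where "b = (\<lambda>k. [(n choose k)] \<cdot> (x [^] k \<otimes> y [^] (Suc n - k)))"
  have T: "T m k \<in> carrier R" and ab: "a k \<in> carrier R" "b k \<in> carrier R" for m k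
    unfolding T_def a_def b_def using x y by simp_all
  have b_top: "b (Suc n) = \<zero>"
    by (simp add: b_def binomial_eq_0)
  have Tx: "(\<Oplus>k \<in> {..n}. T n k) \<otimes> x = (\<Oplus>k \<in> {..n}. a k)"
    using x T by (simp add: finsum_ldistr Pi_def, intro finsum_cong')
      (use x y in \<open>auto simp: T_def a_def add_pow_ldistr add_pow_rdistr m_ac nat_pow_Suc2\<close>)
  have "(\<Oplus>k \<in> {..n}. T n k) \<otimes> y = (\<Oplus>k \<in> {..n}. b k)"
    using y T by (simp add: finsum_ldistr Pi_def, intro finsum_cong')
      (use x y in \<open>auto simp: T_def b_def add_pow_ldistr add_pow_rdistr m_ac Suc_diff_le nat_pow_Suc2\<close>)
  also have "\<dots> = (\<Oplus>k \<in> {..Suc n}. b k)"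
    using ab finsum_Suc[of b n] by (simp add: Pi_def b_top)
  also have "\<dots> = (\<Oplus>k \<in> {..n}. b (Suc k)) \<oplus> b 0"
    using ab finsum_Suc2[of b n] by (simp add: Pi_def)
  finally have Ty: "(\<Oplus>k \<in> {..n}. T n k) \<otimes> y = (\<Oplus>k \<in> {..n}. b (Suc k)) \<oplus> b 0" .
  have "(\<Oplus>k \<in> {..n}. T (Suc n) (Suc k)) = (\<Oplus>k \<in> {..n}. a k \<oplus> b (Suc k))"
    by (rule finsum_cong') (use x y in \<open>auto simp: T_def a_def b_def add.nat_pow_mult\<close>)
  then have "(\<Oplus>k \<in> {..Suc n}. T (Suc n) k) = (\<Oplus>k \<in> {..n}. a k \<oplus> b (Suc k)) \<oplus> b 0"
    using finsum_Suc2[of "T (Suc n)" n] T by (simp add: Pi_def T_def b_def)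
  also have "\<dots> = ((\<Oplus>k \<in> {..n}. a k) \<oplus> (\<Oplus>k \<in> {..n}. b (Suc k))) \<oplus> b 0"
    using ab by (simp add: finsum_addf Pi_def)
  also have "\<dots> = (\<Oplus>k \<in> {..n}. T n k) \<otimes> (x \<oplus> y)"
    using x y T ab by (simp add: Tx Ty r_distr a_assoc)
  finally show ?case
    using Suc by (simp add: T_def)
qed

lemma (in ring) add_pow_eq_zero_if_char_dvd:
  assumes char: "[(p::nat)] \<cdot> \<one> = \<zero>" and z: "z \<in> carrier R" and "p dvd k"
  shows "[k] \<cdot> z = \<zero>"
proof -
  obtain m where k: "k = p * m" using \<open>p dvd k\<close> ..
  have "[p] \<cdot> z = \<zero>"
    using add_pow_ldistr[of \<one> z p] char z by simp
  then show ?thesis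
    using z by (simp add: k add.nat_pow_pow[symmetric])
qed

lemma (in cring) frobenius_add:
  assumes p: "Factorial_Ring.prime p" and char: "[(p::nat)] \<cdot> \<one> = \<zero>"
    and x: "x \<in> carrier R" and y: "y \<in> carrier R"
  shows "(x \<oplus> y) [^] p = x [^] p \<oplus> y [^] p"
proof -
  define f where "f = (\<lambda>k. [(p choose k)] \<cdot> (x [^] k \<otimes> y [^] (p - k)))"
  have f: "f k \<in> carrier R" for k
    unfolding f_def using x y by simp
  have inner: "f k = \<zero>" if "0 < k" "k < p" for k
    unfolding f_def using x y that p
    by (intro add_pow_eq_zero_if_char_dvd[OF char]) (auto intro: dvd_choose_prime)
  obtain l where l: "p = Suc (Suc l)"
    using prime_ge_2_nat[OF p] by (metis add_2_eq_Suc le_Suc_ex)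
  have "(x \<oplus> y) [^] p = (\<Oplus>k \<in> {..p}. f k)"
    unfolding f_def using binomial_ring[OF x y] by simp
  also have "\<dots> = f p \<oplus> ((\<Oplus>k \<in> {..l}. f (Suc k)) \<oplus> f 0)"
    unfolding l using finsum_Suc[of f "Suc l"] finsum_Suc2[of f l] f by (simp add: Pi_def)
  also have "(\<Oplus>k \<in> {..l}. f (Suc k)) = (\<Oplus>k \<in> {..l}. \<zero>)"
    by (rule finsum_cong') (use inner l in auto)
  finally show ?thesis
    using x y f by (simp add: f_def a_comm)
qed

lemma (in cring) frobenius_power_add:
  assumes p: "Factorial_Ring.prime p" and char: "[(p::nat)] \<cdot> \<one> = \<zero>"
    and x: "x \<in> carrier R" and y: "y \<in> carrier R"
  shows "(x \<oplus> y) [^] (p ^ e) = x [^] (p ^ e) \<oplus> y [^] (p ^ e)"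
proof (induction e)
  case (Suc e)
  have "(x \<oplus> y) [^] (p ^ Suc e) = ((x \<oplus> y) [^] (p ^ e)) [^] p"
    using x y by (simp add: nat_pow_pow mult.commute)
  also have "\<dots> = (x [^] (p ^ e)) [^] p \<oplus> (y [^] (p ^ e)) [^] p"
    using Suc frobenius_add[OF p char] x y by simp
  also have "\<dots> = x [^] (p ^ Suc e) \<oplus> y [^] (p ^ Suc e)"
    using x y by (simp add: nat_pow_pow mult.commute)
  finally show ?case .
qed (use x y in simp)

lemma (in cring) frobenius_power_neg:
  assumes p: "Factorial_Ring.prime p" and char: "[(p::nat)] \<cdot> \<one> = \<zero>" and x: "x \<in> carrier R"
  shows "(\<ominus> x) [^] (p ^ e) = \<ominus> (x [^] (p ^ e))"
proof -
  have "x [^] (p ^ e) \<oplus> (\<ominus> x) [^] (p ^ e) = (x \<oplus> \<ominus> x) [^] (p ^ e)"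
    using frobenius_power_add[OF p char x] x by simp
  also have "\<dots> = \<zero>"
    using x p by (simp add: r_neg nat_pow_zero prime_gt_0_nat)
  finally show ?thesis
    using x by (metis add.inv_closed minus_equality a_comm nat_pow_closed)
qed

lemma (in cring) subring_frobenius_fixed_points:
  assumes p: "Factorial_Ring.prime p" and char: "[(p::nat)] \<cdot> \<one> = \<zero>"
  shows "subring {x \<in> carrier R. x [^] (p ^ e) = x} R"
  by (rule subringI)
    (auto simp: frobenius_power_neg[OF p char] frobenius_power_add[OF p char] nat_pow_distrib)

lemma (in ring_hom_ring) hom_add_pow:
  assumes "x \<in> carrier R"
  shows "h ([(n::nat)] \<cdot>\<^bsub>R\<^esub> x) = [n] \<cdot>\<^bsub>S\<^esub> h x"
  using group_hom.hom_nat_pow[OF a_group_hom] assms by (simp add: add_pow_def)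

lemma (in residues) res_add_pow_one: "[(n::nat)] \<cdot> \<one> = int n mod m"
proof (induction n)
  case (Suc n)
  have "[Suc n] \<cdot> \<one> = [n] \<cdot> \<one> \<oplus> \<one>"
    using add.nat_pow_Suc by simp
  then show ?case
    using Suc by (simp add: res_add_eq res_one_eq mod_add_left_eq add.commute[of 1])
qed (simp add: res_zero_eq)

section \<open>Finite fields\<close>

definition (in ring) X_pow_minus_X :: "nat \<Rightarrow> 'a list"
  where "X_pow_minus_X q = X [^]\<^bsub>poly_ring R\<^esub> q \<ominus>\<^bsub>poly_ring R\<^esub> X"

context domain
begin

lemma X_pow_minus_X_closed: "X_pow_minus_X q \<in> carrier (poly_ring R)"
proof -
  interpret UP: domain "poly_ring R"
    using univ_poly_is_domain[OF carrier_is_subring] .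
  show ?thesis
    unfolding X_pow_minus_X_def using var_closed(1)[OF carrier_is_subring] by simp
qed

lemma eval_X_pow_minus_X:
  assumes x: "x \<in> carrier R"
  shows "eval (X_pow_minus_X q) x = x [^] q \<ominus> x"
proof -
  interpret EV: ring_hom_ring "poly_ring R" R "\<lambda>p. eval p x"
    using eval_ring_hom[OF carrier_is_subring x] .
  show ?thesis
    unfolding X_pow_minus_X_def
    using var_closed(1)[OF carrier_is_subring] x EV.hom_nat_pow eval_var[OF x]
    by (simp add: a_minus_def)
qed

lemma degree_X_pow_minus_X:
  assumes "q \<ge> 2"
  shows "degree (X_pow_minus_X q) = q"
proof -
  interpret UP: domain "poly_ring R"
    using univ_poly_is_domain[OF carrier_is_subring] .
  have X: "X \<in> carrier (poly_ring R)"
    using var_closed(1)[OF carrier_is_subring] .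
  have "X_pow_minus_X q = poly_add (X [^]\<^bsub>poly_ring R\<^esub> q) (\<ominus>\<^bsub>poly_ring R\<^esub> X)"
    unfolding X_pow_minus_X_def a_minus_def by (simp add: univ_poly_add)
  moreover have "degree (X [^]\<^bsub>poly_ring R\<^esub> q) = q"
    using polynomial_pow_degree[OF X, of q] by (simp add: var_def)
  moreover have "degree (\<ominus>\<^bsub>poly_ring R\<^esub> X) = 1"
    using univ_poly_a_inv_degree[OF carrier_is_subring X] by (simp add: var_def)
  moreover have "polynomial (carrier R) (X [^]\<^bsub>poly_ring R\<^esub> q)"
    and "polynomial (carrier R) (\<ominus>\<^bsub>poly_ring R\<^esub> X)"
    using X univ_poly_carrier by (metis UP.nat_pow_closed, metis UP.add.inv_closed)
  ultimately show ?thesis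
    using assms poly_add_degree_eq[OF carrier_is_subring] by (simp del: poly_add.simps)
qed

lemma is_root_X_pow_minus_X_iff:
  assumes "q \<ge> 2"
  shows "is_root (X_pow_minus_X q) x \<longleftrightarrow> x \<in> carrier R \<and> x [^] q = x"
proof -
  have "X_pow_minus_X q \<noteq> []"
    using degree_X_pow_minus_X[OF assms] assms by auto
  then show ?thesis
    unfolding is_root_def using eval_X_pow_minus_X by auto
qed

lemma X_pow_minus_X_factor_at_fixed_point:
  assumes p: "Factorial_Ring.prime p" and char: "[(p::nat)] \<cdot> \<one> = \<zero>"
    and a: "a \<in> carrier R" and fixed: "a [^] (p ^ e) = a"
  shows "X_pow_minus_X (p ^ e) = [\<one>, \<ominus> a] \<otimes>\<^bsub>poly_ring R\<^esub>
           ([\<one>, \<ominus> a] [^]\<^bsub>poly_ring R\<^esub> (p ^ e - 1) \<ominus>\<^bsub>poly_ring R\<^esub> \<one>\<^bsub>poly_ring R\<^esub>)"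
proof -
  interpret UP: domain "poly_ring R"
    using univ_poly_is_domain[OF carrier_is_subring] .
  interpret PC: ring_hom_ring R "poly_ring R" poly_of_const
    using canonical_embedding_ring_hom[OF carrier_is_subring] by simp
  define q where "q = p ^ e"
  define C where "C = poly_of_const (\<ominus> a)"
  define Y where "Y = [\<one>, \<ominus> a]"
  have X: "X \<in> carrier (poly_ring R)"
    using var_closed(1)[OF carrier_is_subring] .
  have C: "C \<in> carrier (poly_ring R)"
    unfolding C_def using a by simp
  have Y: "Y = X \<oplus>\<^bsub>poly_ring R\<^esub> C"
    unfolding Y_def C_def var_def poly_of_const_def univ_poly_add using a by auto
  have char_poly: "[p] \<cdot>\<^bsub>poly_ring R\<^esub> \<one>\<^bsub>poly_ring R\<^esub> = \<zero>\<^bsub>poly_ring R\<^esub>"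
    using PC.hom_add_pow[of \<one> p] char by simp
  have "(\<ominus> a) [^] q = \<ominus> a"
    unfolding q_def using frobenius_power_neg[OF p char a] fixed by simp
  then have "C [^]\<^bsub>poly_ring R\<^esub> q = C"
    unfolding C_def using PC.hom_nat_pow[of "\<ominus> a" q] a by (metis add.inv_closed)
  then have Yq: "Y [^]\<^bsub>poly_ring R\<^esub> q = X [^]\<^bsub>poly_ring R\<^esub> q \<oplus>\<^bsub>poly_ring R\<^esub> C"
    unfolding Y q_def using UP.frobenius_power_add[OF p char_poly X C] by simp
  have "Y \<otimes>\<^bsub>poly_ring R\<^esub> (Y [^]\<^bsub>poly_ring R\<^esub> (q - 1) \<ominus>\<^bsub>poly_ring R\<^esub> \<one>\<^bsub>poly_ring R\<^esub>)
      = Y [^]\<^bsub>poly_ring R\<^esub> q \<ominus>\<^bsub>poly_ring R\<^esub> Y"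
    using UP.nat_pow_Suc2[of Y "q - 1"] X C p
    by (simp add: Y q_def UP.r_minus UP.r_distr a_minus_def prime_gt_0_nat)
  also have "\<dots> = (X [^]\<^bsub>poly_ring R\<^esub> q \<oplus>\<^bsub>poly_ring R\<^esub> C) \<ominus>\<^bsub>poly_ring R\<^esub> (X \<oplus>\<^bsub>poly_ring R\<^esub> C)"
    unfolding Yq by (simp only: Y)
  also have "\<dots> = X_pow_minus_X q"
    unfolding X_pow_minus_X_def a_minus_def using X C
    by (simp add: UP.minus_add UP.a_ac UP.r_neg UP.r_neg1 UP.r_neg2)
  finally show ?thesis
    by (simp add: Y_def q_def)
qed

lemma alg_mult_le_1_if_cofactor_nonzero:
  assumes a: "a \<in> carrier R" and U: "U \<in> carrier (poly_ring R)"
    and P: "P = [\<one>, \<ominus> a] \<otimes>\<^bsub>poly_ring R\<^esub> U" and "eval U a \<noteq> \<zero>"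
  shows "alg_mult P a \<le> 1"
proof (rule ccontr)
  interpret UP: domain "poly_ring R"
    using univ_poly_is_domain[OF carrier_is_subring] .
  interpret EV: ring_hom_ring "poly_ring R" R "\<lambda>p. eval p a"
    using eval_ring_hom[OF carrier_is_subring a] .
  define Y where "Y = [\<one>, \<ominus> a]"
  have Y: "Y \<in> carrier (poly_ring R)" "Y \<noteq> \<zero>\<^bsub>poly_ring R\<^esub>"
    unfolding Y_def using a by (auto simp: univ_poly_carrier[symmetric] polynomial_def univ_poly_zero)
  have "P \<in> carrier (poly_ring R)"
    unfolding P using Y U by (simp add: Y_def)
  moreover assume "\<not> alg_mult P a \<le> 1"
  ultimately obtain W where W: "W \<in> carrier (poly_ring R)"
    and PW: "P = Y [^]\<^bsub>poly_ring R\<^esub> (2::nat) \<otimes>\<^bsub>poly_ring R\<^esub> W"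
    using le_alg_mult_imp_pdivides[OF a, of P 2] unfolding pdivides_def factor_def Y_def by auto
  have "Y \<otimes>\<^bsub>poly_ring R\<^esub> U = Y \<otimes>\<^bsub>poly_ring R\<^esub> (Y \<otimes>\<^bsub>poly_ring R\<^esub> W)"
    using P PW Y W by (simp add: Y_def UP.m_assoc numeral_2_eq_2)
  then have "U = Y \<otimes>\<^bsub>poly_ring R\<^esub> W"
    using UP.m_lcancel Y U W by simp
  moreover have "eval Y a = \<zero>"
    using a by (simp add: Y_def r_neg)
  ultimately have "eval U a = \<zero>"
    using Y W a by (simp add: eval_in_carrier)
  with \<open>eval U a \<noteq> \<zero>\<close> show False ..
qed

lemma alg_mult_X_pow_minus_X_le_1:
  assumes p: "Factorial_Ring.prime p" and char: "[(p::nat)] \<cdot> \<one> = \<zero>" and "e > 0"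
  shows "alg_mult (X_pow_minus_X (p ^ e)) a \<le> 1"
proof (cases "is_root (X_pow_minus_X (p ^ e)) a")
  case True
  interpret UP: domain "poly_ring R"
    using univ_poly_is_domain[OF carrier_is_subring] .
  interpret EV: ring_hom_ring "poly_ring R" R "\<lambda>p. eval p a"
    using eval_ring_hom[OF carrier_is_subring] True by (simp add: is_root_def)
  define Y where "Y = [\<one>, \<ominus> a]"
  define U where "U = Y [^]\<^bsub>poly_ring R\<^esub> (p ^ e - 1) \<ominus>\<^bsub>poly_ring R\<^esub> \<one>\<^bsub>poly_ring R\<^esub>"
  have "p ^ e \<ge> 2"
    using one_less_power[OF prime_gt_1_nat[OF p] \<open>e > 0\<close>] by simp
  then have a: "a \<in> carrier R" "a [^] (p ^ e) = a"
    using True is_root_X_pow_minus_X_iff by blast+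
  have Y: "Y \<in> carrier (poly_ring R)"
    unfolding Y_def using a by (auto simp: univ_poly_carrier[symmetric] polynomial_def)
  have "eval U a = \<ominus> \<one>"
    unfolding U_def using Y a \<open>p ^ e \<ge> 2\<close>
    by (simp add: Y_def EV.hom_nat_pow nat_pow_zero a_minus_def r_neg)
  then show ?thesis
    using X_pow_minus_X_factor_at_fixed_point[OF p char a] Y
    by (intro alg_mult_le_1_if_cofactor_nonzero[OF a(1), of U]) (simp_all add: U_def Y_def)
next
  case False
  then show ?thesis
    using alg_mult_gt_zero_iff_is_root[OF X_pow_minus_X_closed, of "p ^ e" a] by simp
qed

end

lemma (in algebraically_closed) card_frobenius_fixed_points:
  assumes p: "Factorial_Ring.prime p" and char: "[(p::nat)] \<cdot> \<one> = \<zero>" and "e > 0"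
  shows "card {x \<in> carrier L. x [^] (p ^ e) = x} = p ^ e"
proof -
  define P where "P = X_pow_minus_X (p ^ e)"
  have P: "P \<in> carrier (poly_ring L)"
    unfolding P_def by (rule X_pow_minus_X_closed)
  have "p ^ e \<ge> 2"
    using one_less_power[OF prime_gt_1_nat[OF p] \<open>e > 0\<close>] by simp
  then have deg: "degree P = p ^ e"
    unfolding P_def by (rule degree_X_pow_minus_X)
  have roots: "{x. is_root P x} = {x \<in> carrier L. x [^] (p ^ e) = x}"
    unfolding P_def using is_root_X_pow_minus_X_iff[OF \<open>p ^ e \<ge> 2\<close>] by blast
  have "roots P = mset_set {x. is_root P x}"
  proof (rule multiset_eqI)
    fix x
    have "alg_mult P x \<le> 1"
      unfolding P_def by (rule alg_mult_X_pow_minus_X_le_1[OF p char \<open>e > 0\<close>])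
    then have "alg_mult P x = (if is_root P x then 1 else 0)"
      using alg_mult_gt_zero_iff_is_root[OF P, of x] by auto
    then have "count (roots P) x = (if is_root P x then 1 else 0)"
      using alg_mult_eq_count_roots[OF P] by simp
    then show "count (roots P) x = count (mset_set {x. is_root P x}) x"
      using finite_number_of_roots[OF P] by simp
  qed
  then have "card {x. is_root P x} = size (roots P)"
    by simp
  also have "\<dots> = p ^ e"
    using roots_over_carrier[OF P] deg by (simp add: splitted_def)
  finally show ?thesis
    using roots by simp
qed

(* The type of L is the one on which HOL-Algebra builds algebraic closures; a statement
   cannot quantify existentially over types. *)
lemma finite_field_exists:
  assumes "primepow q"
  obtains L :: "((int list \<times> nat) multiset \<Rightarrow> int) ring" and S
  where "field L" "subring S L" "finite S" "card S = q"
proof -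
  obtain p e where p: "Factorial_Ring.prime p" and "e > 0" and q: "q = p ^ e"
    using assms unfolding primepow_def by auto
  interpret Fp: residues_prime p "residue_ring (int p)"
    by unfold_locales (rule p)
  obtain L :: "((int list \<times> nat) multiset \<Rightarrow> int) ring"
    where closure: "algebraic_closure L (Fp.indexed_const ` carrier (residue_ring (int p)))"
      and hom: "Fp.indexed_const \<in> ring_hom (residue_ring (int p)) L"
    using Fp.exists_closure by blast
  interpret L: algebraic_closure L "Fp.indexed_const ` carrier (residue_ring (int p))"
    by (rule closure)
  interpret H: ring_hom_ring "residue_ring (int p)" L Fp.indexed_const
    using hom by unfold_locales
  have char: "[p] \<cdot>\<^bsub>L\<^esub> \<one>\<^bsub>L\<^esub> = \<zero>\<^bsub>L\<^esub>"
    using H.hom_add_pow[of "\<one>\<^bsub>residue_ring (int p)\<^esub>" p] Fp.res_add_pow_one[of p] H.hom_zero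
    by (simp add: Fp.res_zero_eq)
  define S where "S = {x \<in> carrier L. x [^]\<^bsub>L\<^esub> (p ^ e) = x}"
  have "card S = q"
    unfolding S_def q using L.card_frobenius_fixed_points[OF p char \<open>e > 0\<close>] .
  moreover have "finite S"
    using \<open>card S = q\<close> q p by (intro card_ge_0_finite) (simp add: prime_gt_0_nat)
  moreover have "subring S L"
    unfolding S_def using L.subring_frobenius_fixed_points[OF p char] .
  ultimately show ?thesis
    using that L.field_axioms by blast
qed

section \<open>Reed--Solomon codes\<close>

lemma card_set_mset_le_size: "card (set_mset M) \<le> size M"
  by (induction M) (auto simp: card_insert_if)

lemma (in ring) normalize_eq_Nil_imp_zero: "normalize cs = [] \<Longrightarrow> set cs \<subseteq> {\<zero>}"
  by (induction cs) (auto split: if_splits)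

lemma (in field) coeffs_zero_if_roots_ge_length:
  assumes cs: "set cs \<subseteq> carrier R" and A: "A \<subseteq> carrier R" "finite A"
    and len: "length cs \<le> card A" and roots: "\<forall>x\<in>A. eval cs x = \<zero>"
  shows "set cs \<subseteq> {\<zero>}"
proof (rule ccontr)
  assume nonzero: "\<not> set cs \<subseteq> {\<zero>}"
  define P where "P = normalize cs"
  have "P \<noteq> []"
    using normalize_eq_Nil_imp_zero nonzero unfolding P_def by blast
  have P: "P \<in> carrier (poly_ring R)"
    using normalize_gives_polynomial[OF cs] univ_poly_carrier unfolding P_def by blast
  have "A \<subseteq> {x. is_root P x}"
    using roots A \<open>P \<noteq> []\<close> eval_normalize[OF cs] unfolding P_def by (auto simp: is_root_def)
  then have "card A \<le> card {x. is_root P x}"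
    using finite_number_of_roots[OF P] card_mono by blast
  also have "{x. is_root P x} = set_mset (roots P)"
    using roots_mem_iff_is_root[OF P] by auto
  also have "card (set_mset (roots P)) \<le> size (roots P)"
    by (rule card_set_mset_le_size)
  also have "\<dots> \<le> degree P"
    by (rule size_roots_le_degree[OF P])
  also have "\<dots> < length cs"
    using \<open>P \<noteq> []\<close> normalize_length_le[of cs] unfolding P_def by (cases "normalize cs") auto
  finally show False
    using len by simp
qed

lemma (in cring) eval_map2_minus:
  assumes "length cs = length ds" "set cs \<subseteq> carrier R" "set ds \<subseteq> carrier R" "x \<in> carrier R"
  shows "eval (map2 (\<lambda>a b. a \<ominus> b) cs ds) x = eval cs x \<ominus> eval ds x"
  using assms
proof (induction cs ds rule: list_induct2)
  case (Cons a cs b ds)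
  have "eval cs x \<in> carrier R" "eval ds x \<in> carrier R" "x [^] length ds \<in> carrier R"
    using Cons eval_in_carrier by auto
  then show ?case
    using Cons by (simp add: a_minus_def l_distr l_minus minus_add a_ac)
qed (simp add: a_minus_def)

lemma (in field) eq_if_eval_eq_on_card_ge_length:
  assumes cs: "set cs \<subseteq> carrier R" and ds: "set ds \<subseteq> carrier R"
    and len: "length cs = length ds" "length cs \<le> card A"
    and A: "A \<subseteq> carrier R" "finite A" and agree: "\<forall>x\<in>A. eval cs x = eval ds x"
  shows "cs = ds"
proof -
  define D where "D = map2 (\<lambda>a b. a \<ominus> b) cs ds"
  have D: "set D \<subseteq> carrier R"
    unfolding D_def using cs ds by (auto simp: set_zip intro!: minus_closed)
  have "set D \<subseteq> {\<zero>}"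
    using D A len agree eval_map2_minus[OF len(1) cs ds] eval_in_carrier[OF ds]
    by (intro coeffs_zero_if_roots_ge_length) (auto simp: D_def subset_iff)
  then have "cs ! i \<ominus> ds ! i = \<zero>" if "i < length cs" for i
    using that len unfolding D_def by (auto simp: set_conv_nth)
  then have "cs ! i = ds ! i" if "i < length cs" for i
    using that cs ds len by (metis nth_mem r_right_minus_eq subsetD)
  then show ?thesis
    using len by (simp add: nth_equalityI)
qed

lemma (in field) card_eval_agreements_less_length:
  assumes cs: "set cs \<subseteq> carrier R" and ds: "set ds \<subseteq> carrier R"
    and "length cs = length ds" "cs \<noteq> ds"
    and h: "inj_on h I" "h ` I \<subseteq> carrier R" and "finite I"
  shows "card {i \<in> I. eval cs (h i) = eval ds (h i)} < length cs"
proof (rule ccontr)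
  define J where "J = {i \<in> I. eval cs (h i) = eval ds (h i)}"
  assume "\<not> card J < length cs"
  moreover have "card (h ` J) = card J"
    unfolding J_def by (rule card_image, rule inj_on_subset[OF h(1)]) auto
  ultimately have "length cs \<le> card (h ` J)"
    by simp
  then have "cs = ds"
    using assms by (intro eq_if_eval_eq_on_card_ge_length[of cs ds "h ` J"]) (auto simp: J_def)
  with \<open>cs \<noteq> ds\<close> show False ..
qed

definition agreement_less :: "nat \<Rightarrow> nat \<Rightarrow> (nat \<Rightarrow> nat) set \<Rightarrow> bool" where
  "agreement_less n k F \<longleftrightarrow> (\<forall>x\<in>F. \<forall>y\<in>F. x \<noteq> y \<longrightarrow> card {i \<in> {1..n}. x i = y i} < k)"

lemma (in field) reed_solomon_code:
  assumes S: "subring S R" "finite S" "card S = q" and "n \<le> q" "k \<le> n"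
  shows "\<exists>F \<subseteq> qcube q n. card F = q ^ k \<and> agreement_less n k F"
proof -
  obtain h where h: "bij_betw h {1..q} S"
    using ex_bij_betw_nat_finite_1[OF S(2)] S(3) by auto
  have h_inj: "inj_on h {1..n}"
    using h \<open>n \<le> q\<close> by (auto simp: bij_betw_def intro: inj_on_subset)
  have h_S: "h i \<in> S" if "i \<in> {1..n}" for i
    using h \<open>n \<le> q\<close> that by (auto simp: bij_betw_def)
  define label where "label = inv_into {1..q} h"
  have label: "bij_betw label S {1..q}"
    unfolding label_def using h by (rule bij_betw_inv_into)
  have eval_S: "eval cs x \<in> S" if "set cs \<subseteq> S" "x \<in> S" for cs x
    using ring.eval_in_carrier[OF subring_is_ring[OF S(1)]] that S(1) by simp
  define Cs where "Cs = {cs. set cs \<subseteq> S \<and> length cs = k}"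
  define word where "word cs = restrict (\<lambda>i. label (eval cs (h i))) {1..n}" for cs
  have eval_h_S: "eval cs (h i) \<in> S" if "cs \<in> Cs" "i \<in> {1..n}" for cs i
    using eval_S[of cs "h i"] h_S that unfolding Cs_def by auto
  have agreements: "{i \<in> {1..n}. word cs i = word ds i} = {i \<in> {1..n}. eval cs (h i) = eval ds (h i)}"
    if "cs \<in> Cs" "ds \<in> Cs" for cs ds
    using eval_h_S[OF that(1)] eval_h_S[OF that(2)] bij_betw_imp_inj_on[OF label]
    unfolding word_def by (auto simp: inj_on_eq_iff)
  have few_agreements: "card {i \<in> {1..n}. word cs i = word ds i} < k"
    if cs: "cs \<in> Cs" and ds: "ds \<in> Cs" and "cs \<noteq> ds" for cs ds
  proof -
    have "h ` {1..n} \<subseteq> carrier R"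
      using h_S subringE(1)[OF S(1)] by blast
    moreover have "set cs \<subseteq> carrier R" "set ds \<subseteq> carrier R" "length cs = k" "length ds = k"
      using cs ds subringE(1)[OF S(1)] unfolding Cs_def by auto
    ultimately show ?thesis
      unfolding agreements[OF cs ds]
      using card_eval_agreements_less_length[of cs ds h "{1..n}"] h_inj \<open>cs \<noteq> ds\<close> by simp
  qed
  have "word ` Cs \<subseteq> qcube q n"
    using eval_h_S bij_betw_apply[OF label] unfolding word_def qcube_def by auto
  moreover have "card (word ` Cs) = q ^ k"
  proof -
    have "inj_on word Cs"
    proof (rule inj_onI, rule ccontr)
      fix cs ds
      assume "cs \<in> Cs" "ds \<in> Cs" "word cs = word ds" "cs \<noteq> ds"
      then have "card {i \<in> {1..n}. word cs i = word ds i} < k"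
        using few_agreements by blast
      moreover have "{i \<in> {1..n}. word cs i = word ds i} = {1..n}"
        using \<open>word cs = word ds\<close> by auto
      ultimately show False
        using \<open>k \<le> n\<close> by simp
    qed
    then show ?thesis
      using card_image card_lists_length_eq[OF S(2)] S(3) unfolding Cs_def by metis
  qed
  moreover have "agreement_less n k (word ` Cs)"
    unfolding agreement_less_def using few_agreements by blast
  ultimately show ?thesis
    by blast
qed

lemma agreement_less_code_exists:
  assumes "primepow q" and "n \<le> q" and "k \<le> n"
  shows "\<exists>F \<subseteq> qcube q n. card F = q ^ k \<and> agreement_less n k F"
proof -
  obtain L :: "((int list \<times> nat) multiset \<Rightarrow> int) ring" and S
    where "field L" "subring S L" "finite S" "card S = q"
    using finite_field_exists[OF assms(1)] .
  then show ?thesis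
    using field.reed_solomon_code assms(2,3) by blast
qed

section \<open>Focal families\<close>

lemma focal_family_disagreements_disjoint:
  assumes focal: "focal_family q n r x" and j: "j \<in> {1..<r}" "j' \<in> {1..<r}" "j \<noteq> j'"
  shows "{i \<in> {1..n}. x j i \<noteq> x 0 i} \<inter> {i \<in> {1..n}. x j' i \<noteq> x 0 i} = {}"
proof (rule ccontr)
  assume "\<not> ?thesis"
  then obtain i where i: "i \<in> {1..n}" "x j i \<noteq> x 0 i" "x j' i \<noteq> x 0 i"
    by auto
  have "{l \<in> {1..<r}. x l i = x 0 i} \<subseteq> {1..<r} - {j, j'}"
    using i by auto
  then have "card {l \<in> {1..<r}. x l i = x 0 i} \<le> card ({1..<r} - {j, j'})"
    by (rule card_mono[rotated]) simp
  also have "\<dots> < r - 2"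
    using j by (simp add: card_Diff_subset) arith
  finally show False
    using focal i(1) unfolding focal_family_def by fastforce
qed

lemma focal_family_in_agreement_less:
  assumes focal: "focal_family q n r x" and members: "x ` {..<r} \<subseteq> F"
    and code: "agreement_less n k F"
  shows "(r - 1) * (n + 1 - k) \<le> n"
proof -
  define D where "D j = {i \<in> {1..n}. x j i \<noteq> x 0 i}" for j
  have card_D: "n + 1 - k \<le> card (D j)" if j: "j \<in> {1..<r}" for j
  proof -
    define A where "A = {i \<in> {1..n}. x j i = x 0 i}"
    have "x j \<noteq> x 0"
      using focal j unfolding focal_family_def by (auto dest: inj_onD)
    moreover have "x j \<in> F" "x 0 \<in> F"
      using members j by auto
    ultimately have "card A < k"
      using code unfolding agreement_less_def A_def by blast
    have A: "A \<subseteq> {1..n}" "finite A"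
      unfolding A_def by auto
    have "D j = {1..n} - A"
      unfolding D_def A_def by auto
    then have "card (D j) = n - card A"
      using card_Diff_subset[OF A(2,1)] by simp
    with \<open>card A < k\<close> show ?thesis
      by linarith
  qed
  have "(r - 1) * (n + 1 - k) = (\<Sum>j\<in>{1..<r}. n + 1 - k)"
    by simp
  also have "\<dots> \<le> (\<Sum>j\<in>{1..<r}. card (D j))"
    by (rule sum_mono) (rule card_D)
  also have "\<dots> = card (\<Union>j\<in>{1..<r}. D j)"
  proof (rule card_UN_disjoint[symmetric])
    show "\<forall>j\<in>{1..<r}. \<forall>j'\<in>{1..<r}. j \<noteq> j' \<longrightarrow> D j \<inter> D j' = {}"
      unfolding D_def using focal_family_disagreements_disjoint[OF focal] by blast
  qed (simp_all add: D_def)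
  also have "\<dots> \<le> card {1..n}"
    by (rule card_mono) (auto simp: D_def)
  finally show ?thesis
    by simp
qed

lemma not_contains_focal_if_agreement_less:
  assumes "agreement_less n k F" and "n < (r - 1) * (n + 1 - k)"
  shows "\<not> contains_focal q n r F"
proof
  assume "contains_focal q n r F"
  then obtain x where "focal_family q n r x" "x ` {..<r} \<subseteq> F"
    unfolding contains_focal_def by blast
  then have "(r - 1) * (n + 1 - k) \<le> n"
    using focal_family_in_agreement_less assms(1) by blast
  with assms(2) show False
    by simp
qed

lemma card_le_g_qff:
  assumes "F \<subseteq> qcube q n" and "\<not> contains_focal q n r F"
  shows "card F \<le> g_qff q r n"
proof -
  have "finite (qcube q n)"
    unfolding qcube_def by (simp add: finite_PiE)
  moreover have "{card F | F. F \<subseteq> qcube q n \<and> \<not> contains_focal q n r F} \<subseteq> card ` Pow (qcube q n)"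
    by blast
  ultimately have "finite {card F | F. F \<subseteq> qcube q n \<and> \<not> contains_focal q n r F}"
    by (meson finite_Pow_iff finite_imageI finite_subset)
  then show ?thesis
    unfolding g_qff_def using assms by (blast intro: Max_ge)
qed

lemma ceiling_fraction_bounds:
  fixes r n :: nat
  assumes "r \<ge> 2"
  defines "k \<equiv> nat \<lceil>real ((r - 2) * n) / real (r - 1)\<rceil>"
  shows "k \<le> n" and "n < (r - 1) * (n + 1 - k)"
proof -
  define x where "x = real ((r - 2) * n) / real (r - 1)"
  have r: "real (r - 1) > 0" "real (r - 2) = real (r - 1) - 1"
    using assms by auto
  have x: "real (r - 1) * x = real (r - 2) * real n"
    unfolding x_def using r(1) by simp
  have "real ((r - 2) * n) \<le> real ((r - 1) * n)"
    by (simp only: of_nat_le_iff) (rule mult_le_mono1, simp)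
  then have "x \<le> real ((r - 1) * n) / real (r - 1)"
    unfolding x_def by (rule divide_right_mono) simp
  also have "\<dots> = real n"
    using r(1) by simp
  finally have "0 \<le> x" "x \<le> real n"
    unfolding x_def by simp_all
  then show "k \<le> n"
    unfolding k_def x_def[symmetric] by (simp add: ceiling_le_iff)
  have "real k < x + 1"
    unfolding k_def x_def[symmetric] using \<open>0 \<le> x\<close> ceiling_correct[of x] by simp
  have "real (r - 1) * real k < real (r - 1) * (x + 1)"
    using \<open>real k < x + 1\<close> r(1) by simp
  then have "real n < real (r - 1) * (real n + 1 - real k)"
    using x r(2) by (simp add: algebra_simps)
  also have "\<dots> = real ((r - 1) * (n + 1 - k))"
    using \<open>k \<le> n\<close> by (simp add: of_nat_diff)
  finally show "n < (r - 1) * (n + 1 - k)"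
    by (simp only: of_nat_less_iff)
qed

theorem proposition3p2:
  fixes r n q :: nat
  assumes "r \<ge> 3" and "n \<ge> 1" and "primepow q" and "q \<ge> n"
  shows "g_qff q r n \<ge> q ^ nat \<lceil>real ((r - 2) * n) / real (r - 1)\<rceil>"
proof -
  define k where "k = nat \<lceil>real ((r - 2) * n) / real (r - 1)\<rceil>"
  have "k \<le> n" and "n < (r - 1) * (n + 1 - k)"
    using ceiling_fraction_bounds[of r n] assms(1) unfolding k_def by auto
  then obtain F where "F \<subseteq> qcube q n" "card F = q ^ k" "agreement_less n k F"
    using agreement_less_code_exists[OF assms(3,4)] by blast
  then show ?thesis
    using card_le_g_qff not_contains_focal_if_agreement_less \<open>n < (r - 1) * (n + 1 - k)\<close>
    unfolding k_def by metis
qed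

end
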